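(* For any $m,n\geqslant 0$ and $N\geqslant 1$ and any $T\in V^{m,n}$, $$\tfrac12\big(E^i{}_jE^j{}_i+NE^i{}_i\big)T=\begin{cases}\mathscr{C}_{m,n}(T), & m,n\geqslant 1,\\ \mathscr{L}_m(T), & n=0,\\ \mathscr{R}_n(T)+Nn\,T, & m=0,\end{cases}$$ (summation over repeated indices). In particular, for $m,n\geqslant1$, $\mathscr{C}_{m,n}$ lies in the centre of $C_{m,n}(N)$.
   Context: $V$ is an $N$-dimensional complex vector space with basis $\{e_i\}$ and dual basis $\{e^i\}$ of $V^*$; $V^{m,n}=V^{\otimes m}\otimes V^{*\otimes n}$ ($V^{0,0}=\mathbb{C}$), with the diagonal action of $GL(N)$ (contragredient on $V^*$); $C_{m,n}(N)=\mathrm{End}_{GL(N)}(V^{m,n})$. The matrix units $E^i{}_j\in\mathfrak{gl}_N$ act by $E^i{}_j(e_k)=-e_j\delta^i_k$, $E^i{}_j(e^k)=\delta^k_je^i$, and act on $V^{m,n}$ as derivations (Leibniz rule over the tensor factors). $\tau_{ab}$ ($1\leqslant a<b\leqslant m$) swaps the $a$-th and $b$-th factors $V$, $\tau_{a'b'}$ swaps the $a'$-th and $b'$-th factors $V^*$. $\mathscr{L}_m=\sum_{a<b}\tau_{ab}$ if $m\geqslant2$ and $0$ otherwise; $\mathscr{R}_n=\sum_{a'<b'}\tau_{a'b'}$ if $n\geqslant 2$ and $0$ otherwise. For $1\leqslant a\leqslant m$, $1\leqslant b'\leqslant n$, $\tau_{ab'}$ is the map which contracts the $a$-th $V$-factor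 with the $b'$-th $V^*$-factor and then inserts $\sum_ke_k\otimes e^k$ in these two positions; $\mathscr{A}_{m,n}=\sum_{a,b'}\tau_{ab'}$, and $\mathscr{C}_{m,n}=\mathscr{L}_m+\mathscr{R}_n-\mathscr{A}_{m,n}+Nn$ for $m,n\geqslant 1$. *)

theory Defs
  imports Complex_Main
begin

text \<open>Tensors T in V^{m,n}, V = C^N, are represented by their coefficient functions
  w.r.t. the basis e_{a_1} (x) ... (x) e_{a_m} (x) e^{b_1} (x) ... (x) e^{b_n}:
  T a b is the coefficient, for index lists a (length m) and b (length n) with
  entries in {0..<N} (0-based). Only values at valid index lists matter.\<close>

type_synonym tensor = "nat list \<Rightarrow> nat list \<Rightarrow> complex"

definition valid_idx :: "nat \<Rightarrow> nat list \<Rightarrow> bool" where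
  "valid_idx N xs \<longleftrightarrow> (\<forall>x\<in>set xs. x < N)"

definition idx :: "nat \<Rightarrow> nat \<Rightarrow> nat \<Rightarrow> (nat list \<times> nat list) set" where
  "idx m n N = {(a, b). length a = m \<and> length b = n \<and> valid_idx N a \<and> valid_idx N b}"

definition teq :: "nat \<Rightarrow> nat \<Rightarrow> nat \<Rightarrow> tensor \<Rightarrow> tensor \<Rightarrow> bool" where
  "teq m n N S T \<longleftrightarrow> (\<forall>(a, b)\<in>idx m n N. S a b = T a b)"

definition swap_list :: "nat \<Rightarrow> nat \<Rightarrow> nat list \<Rightarrow> nat list" where
  "swap_list p q xs = xs[p := xs ! q, q := xs ! p]"

text \<open>Matrix unit action: E^i_j e_k = - delta^i_k e_j, E^i_j e^k = delta^k_j e^i,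
  acting as a derivation; written on coefficients.\<close>
definition Eact :: "nat \<Rightarrow> nat \<Rightarrow> nat \<Rightarrow> nat \<Rightarrow> tensor \<Rightarrow> tensor" where
  "Eact m n i j T = (\<lambda>a b.
     (\<Sum>p<m. if a ! p = j then - T (a[p := i]) b else 0)
   + (\<Sum>q<n. if b ! q = i then T a (b[q := j]) else 0))"

definition casimir :: "nat \<Rightarrow> nat \<Rightarrow> nat \<Rightarrow> tensor \<Rightarrow> tensor" where
  "casimir m n N T = (\<lambda>a b. (1/2) *
     ((\<Sum>i<N. \<Sum>j<N. Eact m n i j (Eact m n j i T) a b)
      + of_nat N * (\<Sum>i<N. Eact m n i i T a b)))"

definition tauL :: "nat \<Rightarrow> nat \<Rightarrow> tensor \<Rightarrow> tensor" where
  "tauL p q T = (\<lambda>a b. T (swap_list p q a) b)"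

definition tauR :: "nat \<Rightarrow> nat \<Rightarrow> tensor \<Rightarrow> tensor" where
  "tauR p q T = (\<lambda>a b. T a (swap_list p q b))"

text \<open>tau_{pq'}: contract p-th V factor with q-th V* factor, then insert sum_k e_k (x) e^k.\<close>
definition tauA :: "nat \<Rightarrow> nat \<Rightarrow> nat \<Rightarrow> tensor \<Rightarrow> tensor" where
  "tauA N p q T = (\<lambda>a b. if a ! p = b ! q then (\<Sum>k<N. T (a[p := k]) (b[q := k])) else 0)"

definition Lop :: "nat \<Rightarrow> tensor \<Rightarrow> tensor" where
  "Lop m T = (\<lambda>a b. if m \<ge> 2 then (\<Sum>p<m. \<Sum>q\<in>{p<..<m}. tauL p q T a b) else 0)"

definition Rop :: "nat \<Rightarrow> tensor \<Rightarrow> tensor" where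
  "Rop n T = (\<lambda>a b. if n \<ge> 2 then (\<Sum>p<n. \<Sum>q\<in>{p<..<n}. tauR p q T a b) else 0)"

definition Aop :: "nat \<Rightarrow> nat \<Rightarrow> nat \<Rightarrow> tensor \<Rightarrow> tensor" where
  "Aop m n N T = (\<lambda>a b. \<Sum>p<m. \<Sum>q<n. tauA N p q T a b)"

definition Cop :: "nat \<Rightarrow> nat \<Rightarrow> nat \<Rightarrow> tensor \<Rightarrow> tensor" where
  "Cop m n N T = (\<lambda>a b. Lop m T a b + Rop n T a b - Aop m n N T a b + of_nat (N * n) * T a b)"

definition is_inverse :: "nat \<Rightarrow> (nat \<Rightarrow> nat \<Rightarrow> complex) \<Rightarrow> (nat \<Rightarrow> nat \<Rightarrow> complex) \<Rightarrow> bool" where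
  "is_inverse N g h \<longleftrightarrow> (\<forall>i<N. \<forall>j<N.
      (\<Sum>k<N. g i k * h k j) = (if i = j then 1 else 0) \<and>
      (\<Sum>k<N. h i k * g k j) = (if i = j then 1 else 0))"

text \<open>Diagonal action of g (inverse h) on V^{m,n}: g e_k = sum_i g_{ik} e_i,
  g e^k = sum_j h_{kj} e^j (contragredient).\<close>
definition gl_act :: "nat \<Rightarrow> nat \<Rightarrow> nat \<Rightarrow> (nat \<Rightarrow> nat \<Rightarrow> complex) \<Rightarrow> (nat \<Rightarrow> nat \<Rightarrow> complex)
    \<Rightarrow> tensor \<Rightarrow> tensor" where
  "gl_act m n N g h T = (\<lambda>a b. \<Sum>(c, d)\<in>idx m n N.
      (\<Prod>p<m. g (a ! p) (c ! p)) * (\<Prod>q<n. h (d ! q) (b ! q)) * T c d)"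

text \<open>Linear endomorphisms of V^{m,n} as matrices indexed by idx m n N.\<close>
definition lin_apply :: "nat \<Rightarrow> nat \<Rightarrow> nat
    \<Rightarrow> (nat list \<times> nat list \<Rightarrow> nat list \<times> nat list \<Rightarrow> complex) \<Rightarrow> tensor \<Rightarrow> tensor" where
  "lin_apply m n N M T = (\<lambda>a b. \<Sum>(c, d)\<in>idx m n N. M (a, b) (c, d) * T c d)"

text \<open>M belongs to C_{m,n}(N) = End_{GL(N)}(V^{m,n}).\<close>
definition in_C :: "nat \<Rightarrow> nat \<Rightarrow> nat
    \<Rightarrow> (nat list \<times> nat list \<Rightarrow> nat list \<times> nat list \<Rightarrow> complex) \<Rightarrow> bool" where
  "in_C m n N M \<longleftrightarrow> (\<forall>g h. is_inverse N g h \<longrightarrow>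
     (\<forall>T. teq m n N (lin_apply m n N M (gl_act m n N g h T)) (gl_act m n N g h (lin_apply m n N M T))))"

definition in_centre_C :: "nat \<Rightarrow> nat \<Rightarrow> nat \<Rightarrow> (tensor \<Rightarrow> tensor) \<Rightarrow> bool" where
  "in_centre_C m n N F \<longleftrightarrow>
     (\<forall>g h. is_inverse N g h \<longrightarrow>
        (\<forall>T. teq m n N (F (gl_act m n N g h T)) (gl_act m n N g h (F T)))) \<and>
     (\<forall>M. in_C m n N M \<longrightarrow>
        (\<forall>T. teq m n N (F (lin_apply m n N M T)) (lin_apply m n N M (F T))))"

end

theory Submission
  imports Defs "HOL-Combinatorics.Permutations"
begin

text \<open>
  Split each E^i_j into its derivations on the V-factors and on the V*-factors. Summed over i
  and j, the terms of E^i_j E^j_i acting twice on V-factors give N m + 2 L_m, those acting twice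
  on V*-factors give N n + 2 R_n, and each of the two mixed kinds gives -A_{m,n}; the term
  N E^i_i is the scalar N (n - m).

  For centrality, C_{m,n} commutes with GL(N) because every tau does: for the swaps this is a
  reindexing, and for tau_{ab'} it amounts to tr (g B g\<inverse>) = tr B and g 1 g\<inverse> = 1.
  Every element of C_{m,n}(N) commutes with the action of gl_N, obtained by differentiating
  GL(N) along the curves 1 + t E through the identity; hence it commutes with the Casimir
  operator, which is C_{m,n} by the formula.
\<close>

definition multi_idx :: "nat \<Rightarrow> nat \<Rightarrow> nat list set" where
  "multi_idx m N = {c. length c = m \<and> valid_idx N c}"

lemma idx_eq_multi_idx: "idx m n N = multi_idx m N \<times> multi_idx n N"
  by (auto simp: idx_def multi_idx_def)

lemma finite_multi_idx: "finite (multi_idx m N)"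
proof -
  have "multi_idx m N = {c. set c \<subseteq> {..<N} \<and> length c = m}"
    by (auto simp: multi_idx_def valid_idx_def)
  then show ?thesis by (simp add: finite_lists_length_eq)
qed

lemma length_multi_idx: "c \<in> multi_idx m N \<Longrightarrow> length c = m"
  by (simp add: multi_idx_def)

lemma multi_idx_nth: "c \<in> multi_idx m N \<Longrightarrow> p < m \<Longrightarrow> c ! p < N"
  by (auto simp: multi_idx_def valid_idx_def)

lemma multi_idx_update: "c \<in> multi_idx m N \<Longrightarrow> x < N \<Longrightarrow> c[p := x] \<in> multi_idx m N"
  by (auto simp: multi_idx_def valid_idx_def dest!: set_update_subset_insert[THEN subsetD])

lemma nth_swap_list:
  "p < length c \<Longrightarrow> q < length c \<Longrightarrow> r < length c \<Longrightarrow> swap_list p q c ! r = c ! transpose p q r"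
  by (auto simp: swap_list_def transpose_def nth_list_update)

lemma swap_list_commute: "swap_list p q c = swap_list q p c"
  by (cases "p = q") (simp_all add: swap_list_def list_update_swap)

lemma swap_list_swap_list:
  "p < length c \<Longrightarrow> q < length c \<Longrightarrow> swap_list p q (swap_list p q c) = c"
  by (auto simp: list_eq_iff_nth_eq swap_list_def nth_list_update)

lemma multi_idx_swap_list:
  "c \<in> multi_idx m N \<Longrightarrow> p < m \<Longrightarrow> q < m \<Longrightarrow> swap_list p q c \<in> multi_idx m N"
  by (simp add: swap_list_def multi_idx_update multi_idx_nth)

lemma sum_multi_idx_split_at:
  assumes "p < m" "0 < N"
  shows "(\<Sum>c\<in>multi_idx m N. F c) = (\<Sum>c\<in>{c\<in>multi_idx m N. c ! p = 0}. \<Sum>x<N. F (c[p := x]))"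
proof -
  have "(\<Sum>c\<in>multi_idx m N. F c) = (\<Sum>(c, x)\<in>{c\<in>multi_idx m N. c ! p = 0} \<times> {..<N}. F (c[p := x]))"
  proof (rule sum.reindex_bij_witness[of _ "\<lambda>(c, x). c[p := x]" "\<lambda>c. (c[p := 0], c ! p)"])
    fix c assume "c \<in> multi_idx m N"
    with assms show "(\<lambda>(c, x). c[p := x]) (c[p := 0], c ! p) = c"
      "(c[p := 0], c ! p) \<in> {c\<in>multi_idx m N. c ! p = 0} \<times> {..<N}"
      "(case (c[p := 0], c ! p) of (c, x) \<Rightarrow> F (c[p := x])) = F c"
      by (simp_all add: multi_idx_update multi_idx_nth length_multi_idx)
  next
    fix cx assume "cx \<in> {c\<in>multi_idx m N. c ! p = 0} \<times> {..<N}"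
    then obtain c x where "cx = (c, x)" "c \<in> multi_idx m N" "c ! p = 0" "x < N"
      by auto
    moreover from \<open>c ! p = 0\<close> have "c[p := 0] = c"
      by (metis list_update_id)
    ultimately show "(\<lambda>c. (c[p := 0], c ! p)) ((\<lambda>(c, x). c[p := x]) cx) = cx"
      "(\<lambda>(c, x). c[p := x]) cx \<in> multi_idx m N"
      using assms by (simp_all add: multi_idx_update length_multi_idx)
  qed
  then show ?thesis
    by (simp add: sum.cartesian_product)
qed

lemma sum_multi_idx_agree_off:
  assumes "a \<in> multi_idx m N" "p < m"
  shows "(\<Sum>c\<in>multi_idx m N. if \<forall>r\<in>{..<m}-{p}. a ! r = c ! r then F c else 0) = (\<Sum>x<N. F (a[p := x]))"
proof -
  have "(\<Sum>c\<in>multi_idx m N. if \<forall>r\<in>{..<m}-{p}. a ! r = c ! r then F c else 0)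
      = (\<Sum>c\<in>{c\<in>multi_idx m N. \<forall>r\<in>{..<m}-{p}. a ! r = c ! r}. F c)"
    by (simp add: sum.inter_filter finite_multi_idx)
  also have "\<dots> = (\<Sum>x<N. F (a[p := x]))"
  proof (rule sum.reindex_bij_witness[of _ "\<lambda>x. a[p := x]" "\<lambda>c. c ! p"])
    fix c assume "c \<in> {c\<in>multi_idx m N. \<forall>r\<in>{..<m}-{p}. a ! r = c ! r}"
    moreover from this assms have "a[p := c ! p] = c"
      by (auto simp: list_eq_iff_nth_eq nth_list_update length_multi_idx)
    ultimately show "a[p := c ! p] = c" "c ! p \<in> {..<N}" "F (a[p := c ! p]) = F c"
      using assms by (auto simp: multi_idx_nth)
  next
    fix x assume "x \<in> {..<N}"
    with assms show "a[p := x] ! p = x" "a[p := x] \<in> {c\<in>multi_idx m N. \<forall>r\<in>{..<m}-{p}. a ! r = c ! r}"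
      by (auto simp: length_multi_idx multi_idx_update)
  qed
  finally show ?thesis .
qed

lemma if_sum_zero: "(if P then sum g A else 0) = (\<Sum>x\<in>A. if P then g x else 0)"
  by simp

lemma sum_off_diagonal:
  fixes F :: "nat \<Rightarrow> nat \<Rightarrow> 'a::comm_monoid_add"
  shows "(\<Sum>p<m. \<Sum>q<m. if q = p then 0 else F p q) = (\<Sum>p<m. \<Sum>q\<in>{p<..<m}. F p q + F q p)"
proof -
  have "(\<Sum>q<m. if q = p then 0 else F p q) = (\<Sum>q<p. F p q) + (\<Sum>q\<in>{p<..<m}. F p q)"
    if "p < m" for p
  proof -
    have "{..<m} = insert p ({..<p} \<union> {p<..<m})"
      using that by auto
    then have "(\<Sum>q<m. if q = p then 0 else F p q) = (\<Sum>q\<in>{..<p} \<union> {p<..<m}. F p q)"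
      by (simp, intro sum.cong) auto
    also have "\<dots> = (\<Sum>q<p. F p q) + (\<Sum>q\<in>{p<..<m}. F p q)"
      by (rule sum.union_disjoint) auto
    finally show ?thesis .
  qed
  then have "(\<Sum>p<m. \<Sum>q<m. if q = p then 0 else F p q) = (\<Sum>p<m. \<Sum>q<p. F p q) + (\<Sum>p<m. \<Sum>q\<in>{p<..<m}. F p q)"
    by (simp add: sum.distrib)
  also have "(\<Sum>p<m. \<Sum>q<p. F p q) = (\<Sum>p<m. \<Sum>q\<in>{q\<in>{..<m}. q < p}. F p q)"
    by (intro sum.cong) auto
  also have "\<dots> = (\<Sum>q<m. \<Sum>p\<in>{p\<in>{..<m}. q < p}. F p q)"
    by (rule sum.swap_restrict) simp_all
  also have "\<dots> = (\<Sum>q<m. \<Sum>p\<in>{q<..<m}. F p q)"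
    by (intro sum.cong) auto
  finally show ?thesis
    by (simp add: sum.distrib add.commute)
qed

section \<open>The Casimir operator\<close>

(* Coefficient form of the derivation of the m-th tensor power of V that extends e_i \<mapsto> e_j. *)
definition unit_der :: "nat \<Rightarrow> nat \<Rightarrow> nat \<Rightarrow> (nat list \<Rightarrow> complex) \<Rightarrow> nat list \<Rightarrow> complex" where
  "unit_der m i j f a = (\<Sum>p<m. if a ! p = j then f (a[p := i]) else 0)"

lemma Eact_eq_unit_der:
  "Eact m n i j X = (\<lambda>a b. unit_der n j i (X a) b - unit_der m i j (\<lambda>c. X c b) a)"
  by (simp add: fun_eq_iff Eact_def unit_der_def sum_negf[symmetric] if_distrib cong: if_cong)

lemma unit_der_diff:
  "unit_der m i j (\<lambda>c. f c - g c) a = unit_der m i j f a - unit_der m i j g a"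
  by (simp add: unit_der_def sum_subtractf[symmetric] if_distrib cong: if_cong)

lemma unit_der_commute:
  "unit_der m i j (\<lambda>c. unit_der n k l (X c) b) a = unit_der n k l (\<lambda>d. unit_der m i j (\<lambda>c. X c d) a) b"
  unfolding unit_der_def if_sum_zero by (subst sum.swap) (simp add: if_if_eq_conj conj_commute)

lemma sum_unit_der_diag:
  assumes "a \<in> multi_idx m N"
  shows "(\<Sum>i<N. unit_der m i i f a) = of_nat m * f a"
proof -
  have "(\<Sum>i<N. unit_der m i i f a) = (\<Sum>p<m. \<Sum>i<N. if a ! p = i then f (a[p := i]) else 0)"
    unfolding unit_der_def by (rule sum.swap)
  also have "\<dots> = (\<Sum>p<m. f a)"
    using assms by (intro sum.cong refl) (simp add: sum.delta' multi_idx_nth)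
  finally show ?thesis by simp
qed

lemma sum_unit_der_twice:
  assumes a: "a \<in> multi_idx m N"
  shows "(\<Sum>i<N. \<Sum>j<N. unit_der m i j (unit_der m j i f) a)
       = of_nat (N * m) * f a + 2 * (\<Sum>p<m. \<Sum>q\<in>{p<..<m}. f (swap_list p q a))"
proof -
  have len: "length a = m"
    using a by (rule length_multi_idx)
  have inner: "(\<Sum>i<N. if a[p := i] ! r = i then f (a[p := i, r := a ! p]) else 0)
      = (if r = p then of_nat N * f a else 0) + (if r = p then 0 else f (swap_list p r a))"
    if "p < m" "r < m" for p r
    using that a len by (auto simp: swap_list_def sum.delta' multi_idx_nth)
  have "(\<Sum>i<N. \<Sum>j<N. unit_der m i j (unit_der m j i f) a)
      = (\<Sum>p<m. \<Sum>i<N. \<Sum>j<N. if a ! p = j then unit_der m j i f (a[p := i]) else 0)"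
    unfolding unit_der_def[of m _ _ "unit_der m _ _ f"] if_sum_zero
    by (simp only: sum.swap[of _ "{..<N}" "{..<m}"])
  also have "\<dots> = (\<Sum>p<m. \<Sum>i<N. unit_der m (a ! p) i f (a[p := i]))"
    using a by (intro sum.cong refl) (simp add: sum.delta' multi_idx_nth)
  also have "\<dots> = (\<Sum>p<m. \<Sum>r<m. \<Sum>i<N. if a[p := i] ! r = i then f (a[p := i, r := a ! p]) else 0)"
    unfolding unit_der_def by (intro sum.cong refl sum.swap)
  also have "\<dots> = (\<Sum>p<m. \<Sum>r<m. (if r = p then of_nat N * f a else 0) + (if r = p then 0 else f (swap_list p r a)))"
    using inner by (intro sum.cong refl) simp
  also have "\<dots> = of_nat (N * m) * f a + (\<Sum>p<m. \<Sum>q\<in>{p<..<m}. f (swap_list p q a) + f (swap_list q p a))"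
    by (simp add: sum.distrib sum_off_diagonal)
  finally show ?thesis
    by (simp add: swap_list_commute[of _ p for p] sum_distrib_left)
qed

lemma sum_unit_der_contract:
  assumes a: "a \<in> multi_idx m N"
  shows "(\<Sum>i<N. \<Sum>j<N. unit_der m i j (\<lambda>c. unit_der n i j (X c) b) a) = Aop m n N X a b"
proof -
  have "(\<Sum>i<N. \<Sum>j<N. unit_der m i j (\<lambda>c. unit_der n i j (X c) b) a)
      = (\<Sum>p<m. \<Sum>q<n. \<Sum>i<N. \<Sum>j<N. if a ! p = j then if b ! q = j then X (a[p := i]) (b[q := i]) else 0 else 0)"
    unfolding unit_der_def if_sum_zero
    by (simp only: sum.swap[of _ "{..<N}" "{..<m}"] sum.swap[of _ "{..<N}" "{..<n}"])
  also have "\<dots> = (\<Sum>p<m. \<Sum>q<n. \<Sum>i<N. if b ! q = a ! p then X (a[p := i]) (b[q := i]) else 0)"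
    using a by (intro sum.cong refl) (simp add: sum.delta' multi_idx_nth)
  finally show ?thesis
    by (simp add: Aop_def tauA_def eq_commute if_sum_zero)
qed

lemma Lop_eq_sum: "Lop m T = (\<lambda>a b. \<Sum>p<m. \<Sum>q\<in>{p<..<m}. T (swap_list p q a) b)"
  by (cases "m \<ge> 2") (auto simp: fun_eq_iff Lop_def tauL_def intro!: sum.neutral)

lemma Rop_eq_sum: "Rop n T = (\<lambda>a b. \<Sum>p<n. \<Sum>q\<in>{p<..<n}. T a (swap_list p q b))"
  by (cases "n \<ge> 2") (auto simp: fun_eq_iff Rop_def tauR_def intro!: sum.neutral)

lemma casimir_eq_Cop:
  assumes "(a, b) \<in> idx m n N"
  shows "casimir m n N X a b = Cop m n N X a b"
proof -
  from assms have a: "a \<in> multi_idx m N" and b: "b \<in> multi_idx n N"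
    by (simp_all add: idx_eq_multi_idx)
  have "(\<Sum>i<N. \<Sum>j<N. Eact m n i j (Eact m n j i X) a b)
      = (\<Sum>i<N. \<Sum>j<N. unit_der n j i (unit_der n i j (X a)) b)
      - (\<Sum>i<N. \<Sum>j<N. unit_der n j i (\<lambda>d. unit_der m j i (\<lambda>c. X c d) a) b)
      - (\<Sum>i<N. \<Sum>j<N. unit_der m i j (\<lambda>c. unit_der n i j (X c) b) a)
      + (\<Sum>i<N. \<Sum>j<N. unit_der m i j (unit_der m j i (\<lambda>c. X c b)) a)"
    by (simp add: Eact_eq_unit_der unit_der_diff sum.distrib sum_subtractf)
  also have "(\<Sum>i<N. \<Sum>j<N. unit_der n j i (unit_der n i j (X a)) b)
      = of_nat (N * n) * X a b + 2 * Rop n X a b"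
    using sum_unit_der_twice[OF b] by (subst sum.swap) (simp add: Rop_eq_sum)
  also have "(\<Sum>i<N. \<Sum>j<N. unit_der n j i (\<lambda>d. unit_der m j i (\<lambda>c. X c d) a) b)
      = Aop m n N X a b"
    using sum_unit_der_contract[OF a] by (subst sum.swap) (simp only: unit_der_commute[of n _ _ m])
  also have "(\<Sum>i<N. \<Sum>j<N. unit_der m i j (\<lambda>c. unit_der n i j (X c) b) a) = Aop m n N X a b"
    by (rule sum_unit_der_contract[OF a])
  also have "(\<Sum>i<N. \<Sum>j<N. unit_der m i j (unit_der m j i (\<lambda>c. X c b)) a)
      = of_nat (N * m) * X a b + 2 * Lop m X a b"
    using sum_unit_der_twice[OF a] by (simp add: Lop_eq_sum)
  finally have double: "(\<Sum>i<N. \<Sum>j<N. Eact m n i j (Eact m n j i X) a b)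
      = of_nat (N * n) * X a b + 2 * Rop n X a b - Aop m n N X a b - Aop m n N X a b
        + (of_nat (N * m) * X a b + 2 * Lop m X a b)" .
  have diag: "(\<Sum>i<N. Eact m n i i X a b) = (of_nat n - of_nat m) * X a b"
    using sum_unit_der_diag[OF a] sum_unit_der_diag[OF b]
    by (simp add: Eact_eq_unit_der sum_subtractf left_diff_distrib)
  show ?thesis
    unfolding casimir_def Cop_def double diag by (simp add: field_simps)
qed

lemma teq_casimir_Cop: "teq m n N (casimir m n N T) (Cop m n N T)"
  by (auto simp: teq_def casimir_eq_Cop)

section \<open>GL(N)-equivariance of C_{m,n}\<close>

definition pow_act :: "nat \<Rightarrow> nat \<Rightarrow> (nat \<Rightarrow> nat \<Rightarrow> complex) \<Rightarrow> (nat list \<Rightarrow> complex) \<Rightarrow> nat list \<Rightarrow> complex" where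
  "pow_act m N g f a = (\<Sum>c\<in>multi_idx m N. (\<Prod>p<m. g (a ! p) (c ! p)) * f c)"

lemma gl_act_eq_pow_act:
  "gl_act m n N g h T a b = pow_act m N g (\<lambda>c. pow_act n N (\<lambda>x y. h y x) (T c) b) a"
  by (simp add: gl_act_def pow_act_def idx_eq_multi_idx sum.cartesian_product[symmetric]
      sum_distrib_left mult.assoc)

lemma gl_act_eq_pow_act':
  "gl_act m n N g h T a b = pow_act n N (\<lambda>x y. h y x) (\<lambda>d. pow_act m N g (\<lambda>c. T c d) a) b"
  by (simp add: gl_act_eq_pow_act pow_act_def sum_distrib_left sum_distrib_right mult_ac)
     (rule sum.swap)

lemma prod_swap_list:
  assumes "length a = m" "length c = m" "p < m" "q < m"
  shows "(\<Prod>r<m. g (swap_list p q a ! r) (swap_list p q c ! r)) = (\<Prod>r<m. g (a ! r) (c ! r))"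
proof -
  have "(\<Prod>r<m. g (a ! r) (c ! r)) = (\<Prod>r<m. g (a ! transpose p q r) (c ! transpose p q r))"
    using prod.permute[OF permutes_swap_id[of p "{..<m}" q]] assms by (simp add: comp_def)
  also have "\<dots> = (\<Prod>r<m. g (swap_list p q a ! r) (swap_list p q c ! r))"
    using assms by (intro prod.cong refl) (simp add: nth_swap_list)
  finally show ?thesis ..
qed

lemma pow_act_swap_list:
  assumes "length a = m" "p < m" "q < m"
  shows "pow_act m N g (\<lambda>c. f (swap_list p q c)) a = pow_act m N g f (swap_list p q a)"
proof -
  have "swap_list p q (swap_list p q c) = c" "swap_list p q c \<in> multi_idx m N"
    "(\<Prod>r<m. g (swap_list p q a ! r) (swap_list p q c ! r)) = (\<Prod>r<m. g (a ! r) (c ! r))"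
    if "c \<in> multi_idx m N" for c
    using that assms length_multi_idx[OF that]
    by (simp_all add: swap_list_swap_list multi_idx_swap_list prod_swap_list)
  then show ?thesis
    unfolding pow_act_def by (intro sum.reindex_bij_witness[of _ "swap_list p q" "swap_list p q"]) auto
qed

lemma pow_act_split_at:
  assumes "p < m" "0 < N" "length a = m"
  shows "pow_act m N g f a = (\<Sum>c\<in>{c\<in>multi_idx m N. c ! p = 0}.
    (\<Prod>r\<in>{..<m}-{p}. g (a ! r) (c ! r)) * (\<Sum>x<N. g (a ! p) x * f (c[p := x])))"
proof -
  have "(\<Prod>r<m. g (a ! r) (c[p := x] ! r)) = g (a ! p) x * (\<Prod>r\<in>{..<m}-{p}. g (a ! r) (c ! r))"
    if "c \<in> multi_idx m N" for c x
  proof -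
    have "(\<Prod>r<m. g (a ! r) (c[p := x] ! r)) = g (a ! p) x * (\<Prod>r\<in>{..<m}-{p}. g (a ! r) (c[p := x] ! r))"
      using assms that by (simp add: prod.remove[of "{..<m}" p] length_multi_idx)
    then show ?thesis
      by simp
  qed
  then show ?thesis
    unfolding pow_act_def sum_multi_idx_split_at[OF assms(1,2)]
    by (simp add: sum_distrib_left sum_distrib_right mult_ac)
qed

lemma gl_act_split_at:
  assumes "p < m" "q < n" "0 < N" "length a = m" "length b = n"
  shows "gl_act m n N g h T a b = (\<Sum>c\<in>{c\<in>multi_idx m N. c ! p = 0}. \<Sum>d\<in>{d\<in>multi_idx n N. d ! q = 0}.
    (\<Prod>r\<in>{..<m}-{p}. g (a ! r) (c ! r)) * (\<Prod>s\<in>{..<n}-{q}. h (d ! s) (b ! s)) *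
    (\<Sum>x<N. \<Sum>y<N. g (a ! p) x * h y (b ! q) * T (c[p := x]) (d[q := y])))"
  unfolding gl_act_eq_pow_act pow_act_split_at[OF assms(1,3,4)] pow_act_split_at[OF assms(2,3,5)]
  by (simp add: sum_distrib_left sum_distrib_right mult_ac sum.swap[of _ "{..<N}" "{d\<in>multi_idx n N. d ! q = 0}"])

lemma inverse_conj_trace:
  assumes "is_inverse N g h"
  shows "(\<Sum>k<N. \<Sum>x<N. \<Sum>y<N. g k x * h y k * B x y) = (\<Sum>x<N. B x x)"
proof -
  have "(\<Sum>k<N. \<Sum>x<N. \<Sum>y<N. g k x * h y k * B x y) = (\<Sum>x<N. \<Sum>y<N. \<Sum>k<N. g k x * h y k * B x y)"
    by (subst sum.swap) (rule sum.cong[OF refl sum.swap])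
  also have "\<dots> = (\<Sum>x<N. \<Sum>y<N. (\<Sum>k<N. h y k * g k x) * B x y)"
    by (simp add: sum_distrib_left mult_ac)
  also have "\<dots> = (\<Sum>x<N. \<Sum>y<N. if y = x then B x y else 0)"
    using assms by (intro sum.cong refl) (simp add: is_inverse_def)
  finally show ?thesis
    by simp
qed

lemma inverse_conj_identity:
  assumes "is_inverse N g h" "u < N" "v < N"
  shows "(\<Sum>x<N. \<Sum>y<N. g u x * h y v * (if x = y then s else 0)) = (if u = v then s else 0)"
proof -
  have "(\<Sum>x<N. \<Sum>y<N. g u x * h y v * (if x = y then s else 0)) = (\<Sum>x<N. g u x * h x v) * s"
    by (simp add: sum_distrib_right if_distrib[of "\<lambda>z. _ * z"] sum.delta' cong: if_cong)
  then show ?thesis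
    using assms by (simp add: is_inverse_def)
qed

(* After splitting off the two contracted slots, this is tr (g B h) = tr B and g 1 h = 1 for h = g\<inverse>. *)
lemma gl_act_tauA:
  assumes ab: "(a, b) \<in> idx m n N" and pq: "p < m" "q < n"
    and inv: "is_inverse N g h" and N: "0 < N"
  shows "tauA N p q (gl_act m n N g h T) a b = gl_act m n N g h (tauA N p q T) a b"
proof -
  have a: "a \<in> multi_idx m N" and b: "b \<in> multi_idx n N"
    using ab by (simp_all add: idx_eq_multi_idx)
  define C0 where "C0 = {c\<in>multi_idx m N. c ! p = 0}"
  define D0 where "D0 = {d\<in>multi_idx n N. d ! q = 0}"
  define W where "W c d = (\<Prod>r\<in>{..<m}-{p}. g (a ! r) (c ! r)) * (\<Prod>s\<in>{..<n}-{q}. h (d ! s) (b ! s))"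
    for c d
  define V where "V = (\<Sum>c\<in>C0. \<Sum>d\<in>D0. W c d * (\<Sum>k<N. T (c[p := k]) (d[q := k])))"
  have split: "gl_act m n N g h X (a[p := u]) (b[q := v]) = (\<Sum>c\<in>C0. \<Sum>d\<in>D0. W c d *
    (\<Sum>x<N. \<Sum>y<N. g u x * h y v * X (c[p := x]) (d[q := y])))" for X u v
    using gl_act_split_at[OF pq N, of "a[p := u]" "b[q := v]" g h X] a b pq
    by (simp add: length_multi_idx C0_def D0_def W_def)
  define \<Phi> where "\<Phi> k c d = (\<Sum>x<N. \<Sum>y<N. g k x * h y k * T (c[p := x]) (d[q := y]))" for k c d
  have "(\<Sum>k<N. gl_act m n N g h T (a[p := k]) (b[q := k])) = (\<Sum>k<N. \<Sum>c\<in>C0. \<Sum>d\<in>D0. W c d * \<Phi> k c d)"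
    by (simp add: split \<Phi>_def)
  also have "\<dots> = (\<Sum>c\<in>C0. \<Sum>d\<in>D0. W c d * (\<Sum>k<N. \<Phi> k c d))"
    by (simp add: sum_distrib_left) (subst sum.swap, rule sum.cong[OF refl sum.swap])
  also have "\<dots> = V"
    by (simp add: \<Phi>_def inverse_conj_trace[OF inv] V_def)
  finally have lhs: "(\<Sum>k<N. gl_act m n N g h T (a[p := k]) (b[q := k])) = V" .
  have "tauA N p q T (c[p := x]) (d[q := y]) = (if x = y then \<Sum>k<N. T (c[p := k]) (d[q := k]) else 0)"
    if "c \<in> C0" "d \<in> D0" for c d x y
    using that pq by (auto simp: tauA_def C0_def D0_def dest!: length_multi_idx)
  then have "gl_act m n N g h (tauA N p q T) a b
      = (\<Sum>c\<in>C0. \<Sum>d\<in>D0. W c d * (if a ! p = b ! q then \<Sum>k<N. T (c[p := k]) (d[q := k]) else 0))"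
    using split[of "tauA N p q T" "a ! p" "b ! q"] inverse_conj_identity[OF inv] a b pq
    by (simp add: multi_idx_nth)
  also have "\<dots> = (if a ! p = b ! q then V else 0)"
    by (simp add: V_def)
  finally show ?thesis
    by (simp add: tauA_def lhs)
qed

lemma lin_apply_add:
  "lin_apply m n N M (\<lambda>a b. X a b + Y a b) a b = lin_apply m n N M X a b + lin_apply m n N M Y a b"
  by (simp add: lin_apply_def split_def distrib_left sum.distrib)

lemma lin_apply_diff:
  "lin_apply m n N M (\<lambda>a b. X a b - Y a b) a b = lin_apply m n N M X a b - lin_apply m n N M Y a b"
  by (simp add: lin_apply_def split_def right_diff_distrib sum_subtractf)

lemma lin_apply_cmult: "lin_apply m n N M (\<lambda>a b. u * X a b) a b = u * lin_apply m n N M X a b"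
  by (simp add: lin_apply_def split_def sum_distrib_left mult_ac)

lemma lin_apply_sum:
  "lin_apply m n N M (\<lambda>a b. \<Sum>i\<in>I. F i a b) a b = (\<Sum>i\<in>I. lin_apply m n N M (F i) a b)"
  unfolding lin_apply_def sum_distrib_left split_def by (rule sum.swap)

lemma gl_act_eq_lin_apply:
  "gl_act m n N g h = lin_apply m n N (\<lambda>(a, b) (c, d). (\<Prod>p<m. g (a ! p) (c ! p)) * (\<Prod>q<n. h (d ! q) (b ! q)))"
  by (simp add: fun_eq_iff gl_act_def lin_apply_def split_def)

lemma gl_act_Lop:
  assumes "length a = m"
  shows "gl_act m n N g h (Lop m T) a b = Lop m (gl_act m n N g h T) a b"
proof -
  have "gl_act m n N g h (\<lambda>c d. T (swap_list p q c) d) a b = gl_act m n N g h T (swap_list p q a) b"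
    if "p < m" "q < m" for p q
    using pow_act_swap_list[OF assms that] by (simp add: gl_act_eq_pow_act)
  then show ?thesis
    unfolding Lop_eq_sum gl_act_eq_lin_apply[of m n N g h] lin_apply_sum
    by (simp add: gl_act_eq_lin_apply)
qed

lemma gl_act_Rop:
  assumes "length b = n"
  shows "gl_act m n N g h (Rop n T) a b = Rop n (gl_act m n N g h T) a b"
proof -
  have "gl_act m n N g h (\<lambda>c d. T c (swap_list p q d)) a b = gl_act m n N g h T a (swap_list p q b)"
    if "p < n" "q < n" for p q
    using pow_act_swap_list[OF assms that] by (simp add: gl_act_eq_pow_act')
  then show ?thesis
    unfolding Rop_eq_sum gl_act_eq_lin_apply[of m n N g h] lin_apply_sum
    by (simp add: gl_act_eq_lin_apply)
qed

lemma gl_act_Aop: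
  assumes "(a, b) \<in> idx m n N" "is_inverse N g h" "0 < N"
  shows "gl_act m n N g h (Aop m n N T) a b = Aop m n N (gl_act m n N g h T) a b"
  using gl_act_tauA[OF assms(1) _ _ assms(2,3)]
  unfolding Aop_def gl_act_eq_lin_apply[of m n N g h] lin_apply_sum
  by (simp add: gl_act_eq_lin_apply)

lemma gl_act_Cop:
  assumes "is_inverse N g h" "0 < N"
  shows "teq m n N (Cop m n N (gl_act m n N g h T)) (gl_act m n N g h (Cop m n N T))"
  unfolding teq_def
proof clarify
  fix a b assume ab: "(a, b) \<in> idx m n N"
  then have "length a = m" "length b = n"
    by (simp_all add: idx_def)
  with ab assms show "Cop m n N (gl_act m n N g h T) a b = gl_act m n N g h (Cop m n N T) a b"
    unfolding Cop_def gl_act_eq_lin_apply[of m n N g h] lin_apply_add lin_apply_diff lin_apply_cmult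
    by (simp add: gl_act_eq_lin_apply[symmetric] gl_act_Lop gl_act_Rop gl_act_Aop)
qed

section \<open>Commutation with C_{m,n}(N)\<close>

lemma prod_delta_eq:
  assumes "length a = m" "length c = m"
  shows "(\<Prod>p<m. if a ! p = c ! p then 1 else 0) = (if a = c then 1 else (0::'a::comm_semiring_1))"
  using assms by (auto simp: list_eq_iff_nth_eq intro!: prod.neutral prod_zero)

lemma pow_act_one:
  assumes "a \<in> multi_idx m N"
  shows "pow_act m N (\<lambda>x y. if x = y then 1 else 0) f a = f a"
  using assms by (simp add: pow_act_def prod_delta_eq length_multi_idx if_distrib[of "\<lambda>z. z * _"]
      sum.delta finite_multi_idx cong: if_cong)

lemma pow_act_has_field_derivative:
  assumes a: "a \<in> multi_idx m N"
    and G0: "\<And>x y. G 0 x y = (if x = y then 1 else 0)"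
    and G': "\<And>x y. ((\<lambda>t. G t x y) has_field_derivative G' x y) (at 0)"
    and f': "\<And>c. ((\<lambda>t. f t c) has_field_derivative f' c) (at 0)"
  shows "((\<lambda>t. pow_act m N (G t) (f t) a) has_field_derivative
    (\<Sum>p<m. \<Sum>x<N. G' (a ! p) x * f 0 (a[p := x])) + f' a) (at 0)"
proof -
  define P' where "P' c = (\<Sum>p<m. G' (a ! p) (c ! p) * (\<Prod>r\<in>{..<m}-{p}. G 0 (a ! r) (c ! r)))" for c
  have "((\<lambda>t. pow_act m N (G t) (f t) a) has_field_derivative
      (\<Sum>c\<in>multi_idx m N. P' c * f 0 c + f' c * (\<Prod>p<m. G 0 (a ! p) (c ! p)))) (at 0)"
    unfolding pow_act_def P'_def
    by (intro DERIV_sum DERIV_mult has_field_derivative_prod G' f')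
  moreover have "(\<Sum>c\<in>multi_idx m N. f' c * (\<Prod>p<m. G 0 (a ! p) (c ! p))) = f' a"
    using pow_act_one[OF a, of f'] by (simp add: pow_act_def G0 mult.commute)
  moreover have "(\<Sum>c\<in>multi_idx m N. P' c * f 0 c) = (\<Sum>p<m. \<Sum>x<N. G' (a ! p) x * f 0 (a[p := x]))"
  proof -
    have "(\<Prod>r\<in>{..<m}-{p}. G 0 (a ! r) (c ! r)) = (if \<forall>r\<in>{..<m}-{p}. a ! r = c ! r then 1 else 0)" for c p
      by (auto simp: G0 prod_zero_iff intro!: prod.neutral)
    then have "(\<Sum>c\<in>multi_idx m N. P' c * f 0 c)
        = (\<Sum>p<m. \<Sum>c\<in>multi_idx m N. if \<forall>r\<in>{..<m}-{p}. a ! r = c ! r then G' (a ! p) (c ! p) * f 0 c else 0)"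
      unfolding P'_def sum_distrib_right by (subst sum.swap) (simp add: if_distrib[of "\<lambda>z. _ * z * _"] cong: if_cong)
    also have "\<dots> = (\<Sum>p<m. \<Sum>x<N. G' (a ! p) x * f 0 (a[p := x]))"
      using a by (intro sum.cong refl) (simp add: sum_multi_idx_agree_off length_multi_idx)
    finally show ?thesis .
  qed
  ultimately show ?thesis
    by (simp add: sum.distrib)
qed

(* 1 + t E with E the matrix unit sending e_i to e_j: a curve through the identity with velocity E. *)
definition elem_mat :: "complex \<Rightarrow> nat \<Rightarrow> nat \<Rightarrow> nat \<Rightarrow> nat \<Rightarrow> complex" where
  "elem_mat t i j x y = (if x = y then 1 else 0) + t * (if x = j \<and> y = i then 1 else 0)"

definition elem_mat_inv_param :: "complex \<Rightarrow> nat \<Rightarrow> nat \<Rightarrow> complex" where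
  "elem_mat_inv_param t i j = - t / (1 + (if i = j then t else 0))"

lemma elem_mat_mult:
  assumes "x < N" "y < N" "i < N" "j < N"
  shows "(\<Sum>k<N. elem_mat s i j x k * elem_mat t i j k y) = elem_mat (s + t + (if i = j then s * t else 0)) i j x y"
  using assms by (auto simp: elem_mat_def algebra_simps sum.distrib if_distrib[of "\<lambda>z. z * _"]
      if_distrib[of "\<lambda>z. _ * z"] cong: if_cong)

lemma is_inverse_elem_mat:
  assumes "i < N" "j < N" "1 + (if i = j then t else 0) \<noteq> 0"
  shows "is_inverse N (elem_mat t i j) (elem_mat (elem_mat_inv_param t i j) i j)"
proof -
  have "elem_mat_inv_param t i j * (1 + (if i = j then t else 0)) = - t"
    using assms(3) by (simp add: elem_mat_inv_param_def)
  then have "t + elem_mat_inv_param t i j + (if i = j then t * elem_mat_inv_param t i j else 0) = 0"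
    "elem_mat_inv_param t i j + t + (if i = j then elem_mat_inv_param t i j * t else 0) = 0"
    by (cases "i = j"; simp add: algebra_simps)+
  with assms show ?thesis
    unfolding is_inverse_def by (simp add: elem_mat_mult) (simp add: elem_mat_def)
qed

lemma gl_act_elem_mat_has_field_derivative:
  assumes ab: "(a, b) \<in> idx m n N" and ij: "i < N" "j < N"
  shows "((\<lambda>t. gl_act m n N (elem_mat t i j) (elem_mat (elem_mat_inv_param t i j) i j) Y a b)
    has_field_derivative - Eact m n i j Y a b) (at 0)"
proof -
  have a: "a \<in> multi_idx m N" and b: "b \<in> multi_idx n N"
    using ab by (simp_all add: idx_eq_multi_idx)
  define H where "H = (\<lambda>t x y. elem_mat (elem_mat_inv_param t i j) i j y x)"
  have G': "((\<lambda>t. elem_mat t i j x y) has_field_derivative (if y = i then if x = j then 1 else 0 else 0)) (at 0)" for x y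
    by (auto simp: elem_mat_def intro!: derivative_eq_intros)
  have "((\<lambda>t. elem_mat_inv_param t i j) has_field_derivative -1) (at 0)"
    by (cases "i = j") (auto simp: elem_mat_inv_param_def intro!: derivative_eq_intros)
  then have H': "((\<lambda>t. H t x y) has_field_derivative (if y = j then if x = i then -1 else 0 else 0)) (at 0)" for x y
    by (auto simp: H_def elem_mat_def intro!: derivative_eq_intros)
  have H0: "H 0 x y = (if x = y then 1 else 0)" and G0: "elem_mat 0 i j x y = (if x = y then 1 else 0)" for x y
    by (auto simp: H_def elem_mat_def elem_mat_inv_param_def)
  then have H_zero: "H 0 = (\<lambda>x y. if x = y then 1 else 0)"
    by (simp add: fun_eq_iff)
  have inner: "((\<lambda>t. pow_act n N (H t) (Y c) b) has_field_derivative - unit_der n j i (Y c) b) (at 0)" for c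
    using pow_act_has_field_derivative[OF b, of H, OF H0 H' DERIV_const] ij
    by (simp add: unit_der_def sum_negf[symmetric] if_distrib[of uminus] if_distrib[of "\<lambda>z. z * _"]
        sum.delta' cong: if_cong)
  have "((\<lambda>t. pow_act m N (elem_mat t i j) (\<lambda>c. pow_act n N (H t) (Y c) b) a) has_field_derivative
      unit_der m i j (\<lambda>c. Y c b) a - unit_der n j i (Y a) b) (at 0)"
    using pow_act_has_field_derivative[OF a, of "\<lambda>t. elem_mat t i j", OF G0 G' inner] ij
    by (simp add: H_zero pow_act_one[OF b] unit_der_def if_distrib[of "\<lambda>z. z * _"] sum.delta
        cong: if_cong)
  then show ?thesis
    by (simp add: gl_act_eq_pow_act Eact_eq_unit_der H_def)
qed

lemma lin_apply_has_field_derivative: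
  assumes "\<And>c d. (c, d) \<in> idx m n N \<Longrightarrow> ((\<lambda>t. X t c d) has_field_derivative X' c d) (at 0)"
  shows "((\<lambda>t. lin_apply m n N M (X t) a b) has_field_derivative lin_apply m n N M X' a b) (at 0)"
  unfolding lin_apply_def split_def using assms by (intro DERIV_sum DERIV_cmult) auto

lemma lin_apply_cong_teq: "teq m n N X Y \<Longrightarrow> lin_apply m n N M X a b = lin_apply m n N M Y a b"
  unfolding lin_apply_def teq_def by (rule sum.cong) auto

lemma Eact_cong_teq:
  assumes "teq m n N X Y" "(a, b) \<in> idx m n N" "i < N" "j < N"
  shows "Eact m n i j X a b = Eact m n i j Y a b"
proof -
  have "X (a[p := i]) b = Y (a[p := i]) b" "X a (b[q := j]) = Y a (b[q := j])" for p q
    using assms multi_idx_update[of _ _ N] by (auto simp: teq_def idx_eq_multi_idx)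
  then show ?thesis
    unfolding Eact_def by (simp only:)
qed

(* Differentiate at t = 0 the commutation of M with the action of elem_mat t i j. *)
lemma lin_apply_Eact:
  assumes M: "in_C m n N M" and ab: "(a, b) \<in> idx m n N" and ij: "i < N" "j < N"
  shows "lin_apply m n N M (Eact m n i j T) a b = Eact m n i j (lin_apply m n N M T) a b"
proof -
  define g where "g t = elem_mat t i j" for t
  define h where "h t = elem_mat (elem_mat_inv_param t i j) i j" for t
  define F where "F t = lin_apply m n N M (gl_act m n N (g t) (h t) T) a b - gl_act m n N (g t) (h t) (lin_apply m n N M T) a b" for t
  have "(F has_field_derivative
      lin_apply m n N M (\<lambda>c d. - Eact m n i j T c d) a b - - Eact m n i j (lin_apply m n N M T) a b) (at 0)"
    unfolding F_def g_def h_def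
    using ij by (intro DERIV_diff lin_apply_has_field_derivative gl_act_elem_mat_has_field_derivative ab)
  moreover have "lin_apply m n N M (\<lambda>c d. - Eact m n i j T c d) a b = - lin_apply m n N M (Eact m n i j T) a b"
    using lin_apply_cmult[of m n N M "-1"] by simp
  moreover have "(F has_field_derivative 0) (at 0)"
  proof (rule has_field_derivative_transform_within[OF DERIV_const zero_less_one])
    fix t :: complex assume "dist t 0 < 1"
    then have "1 + (if i = j then t else 0) \<noteq> 0"
      by (auto simp: add_eq_0_iff)
    with ij have "is_inverse N (g t) (h t)"
      unfolding g_def h_def by (rule is_inverse_elem_mat)
    with M have "teq m n N (lin_apply m n N M (gl_act m n N (g t) (h t) T))
        (gl_act m n N (g t) (h t) (lin_apply m n N M T))"
      by (simp add: in_C_def)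
    with ab show "0 = F t"
      by (auto simp: teq_def F_def)
  qed simp
  ultimately have "- lin_apply m n N M (Eact m n i j T) a b - - Eact m n i j (lin_apply m n N M T) a b = 0"
    by (metis DERIV_unique)
  then show ?thesis
    by simp
qed

lemma lin_apply_casimir:
  assumes M: "in_C m n N M" and ab: "(a, b) \<in> idx m n N"
  shows "lin_apply m n N M (casimir m n N T) a b = casimir m n N (lin_apply m n N M T) a b"
proof -
  have "teq m n N (lin_apply m n N M (Eact m n j i T)) (Eact m n j i (lin_apply m n N M T))"
    if "i < N" "j < N" for i j
    using lin_apply_Eact[OF M _ that(2,1)] by (auto simp: teq_def)
  then have "lin_apply m n N M (Eact m n i j (Eact m n j i T)) a b
      = Eact m n i j (Eact m n j i (lin_apply m n N M T)) a b" if "i < N" "j < N" for i j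
    using lin_apply_Eact[OF M ab that] Eact_cong_teq[OF _ ab that] that by simp
  then show ?thesis
    unfolding casimir_def lin_apply_cmult lin_apply_add lin_apply_sum
    using lin_apply_Eact[OF M ab] by simp
qed

lemma lin_apply_Cop:
  assumes "in_C m n N M"
  shows "teq m n N (Cop m n N (lin_apply m n N M T)) (lin_apply m n N M (Cop m n N T))"
  unfolding teq_def
proof clarify
  fix a b assume ab: "(a, b) \<in> idx m n N"
  have "Cop m n N (lin_apply m n N M T) a b = casimir m n N (lin_apply m n N M T) a b"
    by (simp add: casimir_eq_Cop[OF ab])
  also have "\<dots> = lin_apply m n N M (casimir m n N T) a b"
    by (simp add: lin_apply_casimir[OF assms ab])
  also have "\<dots> = lin_apply m n N M (Cop m n N T) a b"
    by (rule lin_apply_cong_teq[OF teq_casimir_Cop])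
  finally show "Cop m n N (lin_apply m n N M T) a b = lin_apply m n N M (Cop m n N T) a b" .
qed

theorem lemma2p5:
  fixes m n N :: nat and T :: tensor
  assumes "N \<ge> 1"
  shows "(m \<ge> 1 \<and> n \<ge> 1 \<longrightarrow> teq m n N (casimir m n N T) (Cop m n N T))
       \<and> (n = 0 \<longrightarrow> teq m n N (casimir m n N T) (Lop m T))
       \<and> (m = 0 \<longrightarrow> teq m n N (casimir m n N T) (\<lambda>a b. Rop n T a b + of_nat (N * n) * T a b))
       \<and> (m \<ge> 1 \<and> n \<ge> 1 \<longrightarrow> in_centre_C m n N (Cop m n N))"
proof -
  have "teq m n N (casimir m n N T) (Cop m n N T)"
    by (rule teq_casimir_Cop)
  moreover have "Cop m 0 N T = Lop m T"
    by (simp add: fun_eq_iff Cop_def Rop_def Aop_def)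
  moreover have "Cop 0 n N T = (\<lambda>a b. Rop n T a b + of_nat (N * n) * T a b)"
    by (simp add: fun_eq_iff Cop_def Lop_def Aop_def)
  moreover have "in_centre_C m n N (Cop m n N)"
    using gl_act_Cop lin_apply_Cop assms by (simp add: in_centre_C_def)
  ultimately show ?thesis
    by auto
qed

end
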